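(* Consider the $(1,\lambda)$-CSA-ES with cumulation, i.e. $0<c<1$, with any $\lambda\ge1$ and $d_\sigma>0$, applied to $f(x)=[x]_1$ on $\mathbb{R}^n$. Then almost surely $$\frac1t\ln\Big(\frac{\sigma_t}{\sigma_0}\Big)-\frac{c}{2d_\sigma n}\Big(\frac1t\sum_{i=1}^t[p_i]_1^2-1\Big)\xrightarrow[t\to\infty]{}0,$$ and for every $t$, $$\mathbb{E}\Big(\ln\Big(\frac{\sigma_{t+1}}{\sigma_t}\Big)\Big)=\frac{c}{2d_\sigma n}\big(\mathbb{E}([p_{t+1}]_1^2)-1\big).$$
   Context: For $x\in\mathbb{R}^n$, $[x]_i$ denotes its $i$-th coordinate. The $(1,\lambda)$-CSA-ES with parameters $\lambda\ge1$, $0<c\le1$, $d_\sigma>0$, minimizing $f:\mathbb{R}^n\to\mathbb{R}$, is defined as follows. Start from $X_0\in\mathbb{R}^n$, $\sigma_0>0$, and $p_0\sim\mathcal{N}(0,I_n)$. At iteration $t$, draw $\xi_{t,1},\ldots,\xi_{t,\lambda}$ i.i.d. $\sim\mathcal{N}(0,I_n)$, independent of everything before; the children are $Y_{t,i}=X_t+\sigma_t\xi_{t,i}$. The next parent $X_{t+1}$ is the child with the smallest $f$-value, and $\xi^\star_t$ denotes the corresponding $\xi_{t,i}$, so that $X_{t+1}=X_t+\sigma_t\xi^\star_t$. The cumulative path is $p_{t+1}=(1-c)p_t+\sqrt{c(2-c)}\,\xi^\star_t$, and the step-size is updated as $\sigma_{t+1}=\sigma_t\exp\!\big(\tfrac{c}{2d_\sigma}(\|p_{t+1}\|^2/n-1)\big)$.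 *)

theory Defs
  imports "HOL-Probability.Probability"
begin

text \<open>Vectors of R^n are represented as functions nat => real, coordinates 1..n
  ([x]_j = x j).  The noise of one iteration is given as xs :: nat => nat => real,
  xs i = xi_{t,i} (i in 1..lambda).\<close>

definition sqnorm :: "nat \<Rightarrow> (nat \<Rightarrow> real) \<Rightarrow> real" where
  "sqnorm n x = (\<Sum>j=1..n. (x j)\<^sup>2)"

text \<open>Index of the selected child (the child with smallest f-value; ties, which have
  probability zero, are broken by the smallest index).\<close>
definition csa_sel :: "((nat \<Rightarrow> real) \<Rightarrow> real) \<Rightarrow> nat \<Rightarrow> (nat \<Rightarrow> real) \<Rightarrow> real
     \<Rightarrow> (nat \<Rightarrow> nat \<Rightarrow> real) \<Rightarrow> nat" where
  "csa_sel f lam X \<sigma> xs = (LEAST i. 1 \<le> i \<and> i \<le> lam \<and>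
      (\<forall>k\<in>{1..lam}. f (\<lambda>j. X j + \<sigma> * xs i j) \<le> f (\<lambda>j. X j + \<sigma> * xs k j)))"

primrec csa_state :: "nat \<Rightarrow> nat \<Rightarrow> real \<Rightarrow> real \<Rightarrow> ((nat \<Rightarrow> real) \<Rightarrow> real)
     \<Rightarrow> (nat \<Rightarrow> real) \<Rightarrow> real \<Rightarrow> (nat \<Rightarrow> real) \<Rightarrow> (nat \<Rightarrow> nat \<Rightarrow> nat \<Rightarrow> real)
     \<Rightarrow> nat \<Rightarrow> (nat \<Rightarrow> real) \<times> (nat \<Rightarrow> real) \<times> real" where
  "csa_state n lam c d f X0 \<sigma>0 p0 xi 0 = (X0, p0, \<sigma>0)"
| "csa_state n lam c d f X0 \<sigma>0 p0 xi (Suc t) =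
     (case csa_state n lam c d f X0 \<sigma>0 p0 xi t of (X, p, \<sigma>) \<Rightarrow>
        let xstar = xi t (csa_sel f lam X \<sigma> (xi t));
            p' = (\<lambda>j. (1 - c) * p j + sqrt (c * (2 - c)) * xstar j)
        in ((\<lambda>j. X j + \<sigma> * xstar j), p',
            \<sigma> * exp (c / (2 * d) * (sqnorm n p' / real n - 1))))"

definition csa_X where "csa_X n lam c d f X0 \<sigma>0 p0 xi t = fst (csa_state n lam c d f X0 \<sigma>0 p0 xi t)"
definition csa_p where "csa_p n lam c d f X0 \<sigma>0 p0 xi t = fst (snd (csa_state n lam c d f X0 \<sigma>0 p0 xi t))"
definition csa_sigma where "csa_sigma n lam c d f X0 \<sigma>0 p0 xi t = snd (snd (csa_state n lam c d f X0 \<sigma>0 p0 xi t))"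

end

theory Submission
  imports Defs "HOL-Library.Discrete_Functions"
begin

text \<open>The step-size update gives ln (sigma_t / sigma_0) = c / (2 d) * sum_{s=1..t} (|p_s|^2 / n - 1).
  On f(x) = [x]_1 selection only compares first coordinates of the candidate steps, so for j \<ge> 2
  the selected coordinate [xi*_t]_j is standard normal and independent of the past. Hence [p_t]_j is
  an autoregressive process whose moments up to order 4 are those of a standard normal (because
  (1 - c)^2 + c (2 - c) = 1). Its squares have mean 1, which gives the identity for the expected
  log step-size change; and the variance of sum_{i=1..t} [p_i]_j^2 - t grows only linearly in t, so
  Chebyshev along t = m^2, summability and monotonicity give the strong law
  (1/t) sum_{i=1..t} [p_i]_j^2 \<longrightarrow> 1 almost surely. Removing the coordinates j \<ge> 2 from ln sigma_t
  leaves the almost sure limit.\<close>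

lemma filterlim_floor_sqrt_at_top: "filterlim floor_sqrt at_top at_top"
  unfolding filterlim_at_top
proof
  fix Z :: nat
  show "eventually (\<lambda>t. Z \<le> floor_sqrt t) at_top"
    using eventually_ge_at_top[of "Z ^ 2"] by eventually_elim (rule le_floor_sqrtI)
qed

text \<open>Consecutive squares have ratio tending to 1, so monotonicity squeezes S t / t between
  rescaled averages along the squares.\<close>

lemma LIMSEQ_average_if_LIMSEQ_average_squares:
  fixes S :: "nat \<Rightarrow> real"
  assumes mono: "mono S" and nonneg: "\<And>t. S t \<ge> 0"
    and lim: "(\<lambda>m. S ((m + 1) ^ 2) / real ((m + 1) ^ 2)) \<longlonglongrightarrow> L"
  shows "(\<lambda>t. S t / real t) \<longlonglongrightarrow> L"
proof -
  define R where "R m = S (m ^ 2) / real (m ^ 2)" for m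
  have R: "R \<longlonglongrightarrow> L"
    by (rule LIMSEQ_imp_Suc) (use lim in \<open>simp add: R_def\<close>)
  define lo where "lo m = R m * (real m / real (Suc m)) ^ 2" for m
  define hi where "hi m = R (Suc m) * (real (Suc m) / real m) ^ 2" for m
  have "lo \<longlonglongrightarrow> L * 1 ^ 2"
    unfolding lo_def by (intro tendsto_intros R LIMSEQ_n_over_Suc_n)
  then have lo: "(\<lambda>t. lo (floor_sqrt t)) \<longlonglongrightarrow> L"
    using filterlim_compose filterlim_floor_sqrt_at_top by fastforce
  have "hi \<longlonglongrightarrow> L * 1 ^ 2"
    unfolding hi_def by (intro tendsto_intros LIMSEQ_Suc[OF R] LIMSEQ_Suc_n_over_n)
  then have hi: "(\<lambda>t. hi (floor_sqrt t)) \<longlonglongrightarrow> L"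
    using filterlim_compose filterlim_floor_sqrt_at_top by fastforce
  have bounds: "lo (floor_sqrt t) \<le> S t / real t \<and> S t / real t \<le> hi (floor_sqrt t)"
    if t: "t \<ge> 1" for t
  proof -
    define m where "m = floor_sqrt t"
    have m1: "m \<ge> 1" using t by (simp add: m_def Suc_le_eq)
    have le: "m ^ 2 \<le> t" unfolding m_def by simp
    have lt: "t < Suc m ^ 2" unfolding m_def by (rule Suc_floor_sqrt_power2_gt)
    have rle: "real (m ^ 2) \<le> real t" and rlt: "real t \<le> real (Suc m ^ 2)"
      using le lt by linarith+
    have mpos: "real (m ^ 2) > 0" and tpos: "real t > 0" using m1 t by simp_all
    have S1: "S (m ^ 2) \<le> S t" and S2: "S t \<le> S (Suc m ^ 2)"
      using mono le lt by (simp_all add: mono_def)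
    have "lo m = S (m ^ 2) / real (Suc m ^ 2)"
      using m1 by (simp add: lo_def R_def power_divide)
    also have "\<dots> \<le> S (m ^ 2) / real t"
      by (rule divide_left_mono[OF rlt nonneg]) (use tpos in simp)
    also have "\<dots> \<le> S t / real t" by (rule divide_right_mono[OF S1]) simp
    finally have "lo m \<le> S t / real t" .
    moreover have "S t / real t \<le> S (Suc m ^ 2) / real t" by (rule divide_right_mono[OF S2]) simp
    moreover have "\<dots> \<le> S (Suc m ^ 2) / real (m ^ 2)"
      by (rule divide_left_mono[OF rle nonneg]) (use mpos tpos in simp)
    moreover have "\<dots> = hi m"
      using m1 by (simp add: hi_def R_def power_divide)
    ultimately show ?thesis by (simp add: m_def)
  qed
  show ?thesis
  proof (rule tendsto_sandwich[OF _ _ lo hi])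
    show "eventually (\<lambda>t. lo (floor_sqrt t) \<le> S t / real t) sequentially"
      "eventually (\<lambda>t. S t / real t \<le> hi (floor_sqrt t)) sequentially"
      using eventually_ge_at_top[of "1::nat"] by (eventually_elim, use bounds in blast)+
  qed
qed

lemma AE_LIMSEQ_zero_if_summable_integral:
  fixes g :: "nat \<Rightarrow> 'a \<Rightarrow> real"
  assumes integrable: "\<And>m. integrable M (g m)" and nonneg: "\<And>m x. g m x \<ge> 0"
    and summable: "summable (\<lambda>m. \<integral>x. g m x \<partial>M)"
  shows "AE x in M. (\<lambda>m. g m x) \<longlonglongrightarrow> 0"
proof -
  have [measurable]: "\<And>m. g m \<in> borel_measurable M" using integrable by blast
  have "(\<integral>\<^sup>+x. (\<Sum>m. ennreal (g m x)) \<partial>M) = (\<Sum>m. \<integral>\<^sup>+x. ennreal (g m x) \<partial>M)"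
    by (rule nn_integral_suminf) simp
  also have "\<dots> = (\<Sum>m. ennreal (\<integral>x. g m x \<partial>M))"
    by (intro suminf_cong nn_integral_eq_integral integrable) (simp add: nonneg)
  also have "\<dots> = ennreal (\<Sum>m. \<integral>x. g m x \<partial>M)"
    by (rule suminf_ennreal2[OF _ summable]) (simp add: nonneg)
  finally have "AE x in M. (\<Sum>m. ennreal (g m x)) \<noteq> \<infinity>"
    by (intro nn_integral_PInf_AE) simp_all
  then show ?thesis
  proof (rule AE_mp, intro AE_I2 impI)
    fix x assume "(\<Sum>m. ennreal (g m x)) \<noteq> \<infinity>"
    then have "summable (\<lambda>m. g m x)"
      using summable_suminf_not_top[of "\<lambda>m. g m x"] nonneg by auto
    then show "(\<lambda>m. g m x) \<longlonglongrightarrow> 0" by (rule summable_LIMSEQ_zero)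
  qed
qed

definition has_moments :: "'a measure \<Rightarrow> ('a \<Rightarrow> real) \<Rightarrow> bool" where
  "has_moments M X \<longleftrightarrow> X \<in> borel_measurable M \<and> (\<forall>p. integrable M (\<lambda>x. \<bar>X x\<bar> ^ p))"

lemma has_moments_measurable: "has_moments M X \<Longrightarrow> X \<in> borel_measurable M"
  by (simp add: has_moments_def)

lemma has_moments_integrable:
  assumes "has_moments M X" shows "integrable M X"
proof -
  have "X \<in> borel_measurable M" "integrable M (\<lambda>x. \<bar>X x\<bar> ^ 1)"
    using assms unfolding has_moments_def by blast+
  then show ?thesis by (simp add: integrable_abs_iff)
qed

lemma has_moments_dominated:
  assumes "X \<in> borel_measurable M" "has_moments M Y" "\<And>x. \<bar>X x\<bar> \<le> \<bar>Y x\<bar>"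
  shows "has_moments M X"
  unfolding has_moments_def
proof (intro conjI allI assms(1))
  fix p :: nat
  show "integrable M (\<lambda>x. \<bar>X x\<bar> ^ p)"
  proof (rule Bochner_Integration.integrable_bound)
    show "integrable M (\<lambda>x. \<bar>Y x\<bar> ^ p)" using assms(2) by (simp add: has_moments_def)
    show "(\<lambda>x. \<bar>X x\<bar> ^ p) \<in> borel_measurable M" using assms(1) by measurable
    show "AE x in M. norm (\<bar>X x\<bar> ^ p) \<le> norm (\<bar>Y x\<bar> ^ p)"
      using assms(3) by (intro AE_I2) (simp add: power_mono)
  qed
qed

lemma has_moments_abs:
  assumes "has_moments M X" shows "has_moments M (\<lambda>x. \<bar>X x\<bar>)"
  using has_moments_measurable[OF assms]
  by (intro has_moments_dominated[OF _ assms]) simp_all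

lemma abs_add_power_le: "\<bar>x + y\<bar> ^ p \<le> 2 ^ p * (\<bar>x\<bar> ^ p + \<bar>y\<bar> ^ p)" for x y :: real
proof -
  have "\<bar>x + y\<bar> \<le> 2 * max \<bar>x\<bar> \<bar>y\<bar>" by (auto simp: max_def)
  then have "\<bar>x + y\<bar> ^ p \<le> (2 * max \<bar>x\<bar> \<bar>y\<bar>) ^ p" by (intro power_mono) simp_all
  also have "\<dots> = 2 ^ p * max \<bar>x\<bar> \<bar>y\<bar> ^ p" by (simp add: power_mult_distrib)
  also have "max \<bar>x\<bar> \<bar>y\<bar> ^ p \<le> \<bar>x\<bar> ^ p + \<bar>y\<bar> ^ p" by (simp add: max_def)
  finally show ?thesis by simp
qed

lemma abs_mult_power_le: "\<bar>x * y\<bar> ^ p \<le> \<bar>x\<bar> ^ (2 * p) + \<bar>y\<bar> ^ (2 * p)" for x y :: real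
proof -
  have "\<bar>x * y\<bar> ^ p \<le> 2 * \<bar>x\<bar> ^ p * \<bar>y\<bar> ^ p"
    by (simp add: abs_mult power_mult_distrib)
  also have "\<dots> \<le> (\<bar>x\<bar> ^ p) ^ 2 + (\<bar>y\<bar> ^ p) ^ 2" by (rule sum_squares_bound)
  finally show ?thesis by (simp add: power_mult[symmetric] mult.commute)
qed

lemma has_moments_add:
  assumes X: "has_moments M X" and Y: "has_moments M Y"
  shows "has_moments M (\<lambda>x. X x + Y x)"
  unfolding has_moments_def
proof (intro conjI allI)
  have [measurable]: "X \<in> borel_measurable M" "Y \<in> borel_measurable M"
    using X Y by (simp_all add: has_moments_def)
  show "(\<lambda>x. X x + Y x) \<in> borel_measurable M" by measurable
  fix p :: nat
  show "integrable M (\<lambda>x. \<bar>X x + Y x\<bar> ^ p)"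
  proof (rule Bochner_Integration.integrable_bound)
    show "integrable M (\<lambda>x. 2 ^ p * (\<bar>X x\<bar> ^ p + \<bar>Y x\<bar> ^ p))"
      using X Y by (simp add: has_moments_def)
    show "(\<lambda>x. \<bar>X x + Y x\<bar> ^ p) \<in> borel_measurable M" by measurable
    show "AE x in M. norm (\<bar>X x + Y x\<bar> ^ p) \<le> norm (2 ^ p * (\<bar>X x\<bar> ^ p + \<bar>Y x\<bar> ^ p))"
      by (intro AE_I2) (simp add: abs_add_power_le)
  qed
qed

lemma has_moments_mult:
  assumes X: "has_moments M X" and Y: "has_moments M Y"
  shows "has_moments M (\<lambda>x. X x * Y x)"
  unfolding has_moments_def
proof (intro conjI allI)
  have [measurable]: "X \<in> borel_measurable M" "Y \<in> borel_measurable M"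
    using X Y by (simp_all add: has_moments_def)
  show "(\<lambda>x. X x * Y x) \<in> borel_measurable M" by measurable
  fix p :: nat
  show "integrable M (\<lambda>x. \<bar>X x * Y x\<bar> ^ p)"
  proof (rule Bochner_Integration.integrable_bound)
    show "integrable M (\<lambda>x. \<bar>X x\<bar> ^ (2 * p) + \<bar>Y x\<bar> ^ (2 * p))"
      using X Y by (simp add: has_moments_def)
    show "(\<lambda>x. \<bar>X x * Y x\<bar> ^ p) \<in> borel_measurable M" by measurable
    show "AE x in M. norm (\<bar>X x * Y x\<bar> ^ p) \<le> norm (\<bar>X x\<bar> ^ (2 * p) + \<bar>Y x\<bar> ^ (2 * p))"
      by (intro AE_I2) (simp add: abs_mult_power_le)
  qed
qed

context finite_measure
begin

lemma has_moments_const: "has_moments M (\<lambda>_. a)"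
  by (simp add: has_moments_def)

lemma has_moments_power: "has_moments M X \<Longrightarrow> has_moments M (\<lambda>x. X x ^ k)"
  by (induction k) (auto intro: has_moments_const has_moments_mult)

lemma has_moments_cmult: "has_moments M X \<Longrightarrow> has_moments M (\<lambda>x. a * X x)"
  using has_moments_mult[OF has_moments_const] .

lemma has_moments_diff: "has_moments M X \<Longrightarrow> has_moments M Y \<Longrightarrow> has_moments M (\<lambda>x. X x - Y x)"
  using has_moments_add[of M X "\<lambda>x. (-1) * Y x"] has_moments_cmult[of Y "-1"] by simp

lemma has_moments_sum:
  "(\<And>i. i \<in> I \<Longrightarrow> has_moments M (X i)) \<Longrightarrow> has_moments M (\<lambda>x. \<Sum>i\<in>I. X i x)"
  by (induction I rule: infinite_finite_induct) (auto intro: has_moments_const has_moments_add)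

lemma has_moments_bounded:
  assumes "X \<in> borel_measurable M" "\<And>x. \<bar>X x\<bar> \<le> B" shows "has_moments M X"
  by (rule has_moments_dominated[where Y="\<lambda>_. B", OF assms(1) has_moments_const])
    (metis assms(2) abs_ge_self order_trans)

end

lemma has_moments_std_normal:
  assumes "distributed M lborel X std_normal_density"
  shows "has_moments M X"
  unfolding has_moments_def
proof (intro conjI allI)
  show "X \<in> borel_measurable M" using distributed_measurable[OF assms] by simp
  fix p :: nat
  have "integrable lborel (\<lambda>x. std_normal_density x * \<bar>x\<bar> ^ p) \<longleftrightarrow> integrable M (\<lambda>x. \<bar>X x\<bar> ^ p)"
    by (rule distributed_integrable[OF assms]) auto
  then show "integrable M (\<lambda>x. \<bar>X x\<bar> ^ p)" using integrable_std_normal_moment_abs by simp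
qed

definition std_normal_moment :: "nat \<Rightarrow> real" where
  "std_normal_moment q = (\<integral>x. std_normal_density x * x ^ q \<partial>lborel)"

lemma std_normal_moment_values:
  "std_normal_moment 0 = 1" "std_normal_moment (Suc 0) = 0" "std_normal_moment 2 = 1"
  "std_normal_moment 3 = 0" "std_normal_moment 4 = 3"
proof -
  have "fact (2 * 2) / (2 ^ 2 * fact 2) = (3::real)" by (simp add: fact_numeral)
  then show "std_normal_moment 4 = 3"
    using integral_std_normal_moment_even[of 2] by (simp add: std_normal_moment_def)
qed (use integral_std_normal_moment_even[of 0] integral_std_normal_moment_even[of 1]
      integral_std_normal_moment_odd[of 0] integral_std_normal_moment_odd[of 1]
   in \<open>simp_all add: std_normal_moment_def numeral_eq_Suc\<close>)

lemma integral_power_std_normal: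
  "distributed M lborel X std_normal_density \<Longrightarrow> (\<integral>x. X x ^ q \<partial>M) = std_normal_moment q"
  unfolding std_normal_moment_def by (rule distributed_integral[symmetric]) auto

definition first_argmin :: "nat \<Rightarrow> (nat \<Rightarrow> 'b::linorder) \<Rightarrow> nat \<Rightarrow> bool" where
  "first_argmin lam v l \<longleftrightarrow>
     l \<in> {1..lam} \<and> (\<forall>k\<in>{1..lam}. v l \<le> v k) \<and> (\<forall>k\<in>{1..<l}. v l < v k)"

lemma first_argmin_unique: "first_argmin lam v l \<Longrightarrow> first_argmin lam v l' \<Longrightarrow> l = l'"
  unfolding first_argmin_def by (metis atLeastAtMost_iff atLeastLessThan_iff linorder_neqE_nat
      not_less order_less_le_trans)

lemma first_argmin_exists:
  assumes "lam \<ge> 1" shows "\<exists>l. first_argmin lam v l"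
proof -
  define L where "L = {l\<in>{1..lam}. \<forall>k\<in>{1..lam}. v l \<le> v k}"
  obtain m where "m \<in> {1..lam}" "v m = Min (v ` {1..lam})"
    using Min_in[of "v ` {1..lam}"] assms by fastforce
  then have "m \<in> L" by (auto simp: L_def)
  moreover have "finite L" by (simp add: L_def)
  ultimately have L: "Min L \<in> L" "\<And>k. k \<in> L \<Longrightarrow> Min L \<le> k"
    using Min_in Min_le by blast+
  have "v (Min L) < v k" if "k \<in> {1..<Min L}" for k
  proof (rule ccontr)
    assume "\<not> v (Min L) < v k"
    then have "k \<in> L" using L(1) that by (auto simp: L_def)
    with L(2) that show False by fastforce
  qed
  with L(1) have "first_argmin lam v (Min L)"
    unfolding first_argmin_def L_def by blast
  then show ?thesis by blast
qed

lemma first_argmin_cong: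
  "(\<And>k. k \<in> {1..lam} \<Longrightarrow> v k = v' k) \<Longrightarrow> l \<in> {1..lam} \<Longrightarrow>
    first_argmin lam v l = first_argmin lam v' l"
  unfolding first_argmin_def by auto

lemma Least_first_argmin:
  assumes "first_argmin lam v l"
  shows "(LEAST i. 1 \<le> i \<and> i \<le> lam \<and> (\<forall>k\<in>{1..lam}. v i \<le> v k)) = l"
proof (rule Least_equality)
  show "1 \<le> l \<and> l \<le> lam \<and> (\<forall>k\<in>{1..lam}. v l \<le> v k)"
    using assms by (simp add: first_argmin_def)
  fix y assume y: "1 \<le> y \<and> y \<le> lam \<and> (\<forall>k\<in>{1..lam}. v y \<le> v k)"
  show "l \<le> y"
  proof (rule ccontr)
    assume "\<not> l \<le> y"
    then have "v l < v y" using assms y by (simp add: first_argmin_def)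
    moreover have "v y \<le> v l" using y assms by (simp add: first_argmin_def)
    ultimately show False by simp
  qed
qed

lemma sum_first_argmin:
  assumes "first_argmin lam v l"
  shows "(\<Sum>l'\<in>{1..lam}. if first_argmin lam v l' then g l' else 0) = g l"
proof -
  have "(\<Sum>l'\<in>{1..lam}. if first_argmin lam v l' then g l' else 0)
      = (\<Sum>l'\<in>{1..lam}. if l' = l then g l' else 0)"
    using first_argmin_unique[OF assms] assms by (intro sum.cong refl) metis
  also have "\<dots> = g l" using assms by (simp add: first_argmin_def)
  finally show ?thesis .
qed

lemma csa_sel_first_coordinate:
  assumes "\<sigma> > 0" "lam \<ge> 1"
  shows "first_argmin lam (\<lambda>i. xs i 1) (csa_sel (\<lambda>x. x 1) lam X \<sigma> xs)"
proof -
  obtain l where l: "first_argmin lam (\<lambda>i. xs i 1) l" using first_argmin_exists assms by blast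
  have "csa_sel (\<lambda>x. x 1) lam X \<sigma> xs = l"
    unfolding csa_sel_def using Least_first_argmin[OF l] assms(1) by simp
  with l show ?thesis by simp
qed

lemma csa_sigma_Suc:
  "csa_sigma n lam c d f X0 \<sigma>0 p0 xi (Suc t) = csa_sigma n lam c d f X0 \<sigma>0 p0 xi t *
     exp (c / (2 * d) * (sqnorm n (csa_p n lam c d f X0 \<sigma>0 p0 xi (Suc t)) / real n - 1))"
  by (simp add: csa_sigma_def csa_p_def Let_def split: prod.split)

lemma csa_sigma_pos: "\<sigma>0 > 0 \<Longrightarrow> csa_sigma n lam c d f X0 \<sigma>0 p0 xi t > 0"
  by (induction t) (auto simp: csa_sigma_Suc, simp add: csa_sigma_def)

lemma ln_csa_sigma_Suc_div:
  "\<sigma>0 > 0 \<Longrightarrow> ln (csa_sigma n lam c d f X0 \<sigma>0 p0 xi (Suc t) / csa_sigma n lam c d f X0 \<sigma>0 p0 xi t)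
     = c / (2 * d) * (sqnorm n (csa_p n lam c d f X0 \<sigma>0 p0 xi (Suc t)) / real n - 1)"
  using csa_sigma_pos[of \<sigma>0 n lam c d f X0 p0 xi t] by (simp add: csa_sigma_Suc)

lemma ln_csa_sigma_div_initial:
  assumes "\<sigma>0 > 0"
  shows "ln (csa_sigma n lam c d f X0 \<sigma>0 p0 xi t / \<sigma>0)
     = (\<Sum>s=1..t. c / (2 * d) * (sqnorm n (csa_p n lam c d f X0 \<sigma>0 p0 xi s) / real n - 1))"
proof (induction t)
  case 0
  then show ?case using assms by (simp add: csa_sigma_def)
next
  case (Suc t)
  let ?\<sigma> = "csa_sigma n lam c d f X0 \<sigma>0 p0 xi"
  have "?\<sigma> t > 0" "?\<sigma> (Suc t) > 0" using csa_sigma_pos[OF assms] by blast+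
  then have "ln (?\<sigma> (Suc t) / \<sigma>0) = ln (?\<sigma> t / \<sigma>0) + ln (?\<sigma> (Suc t) / ?\<sigma> t)"
    using assms by (simp add: ln_div)
  then show ?case using Suc ln_csa_sigma_Suc_div[OF assms] by simp
qed

text \<open>A realisation of all the noise is a function on the index set of the independence
  hypothesis: \<open>Inl j\<close> indexes the coordinates of p_0 and \<open>Inr (t, i, j)\<close> those of
  xi_{t,i}.\<close>

type_synonym noise_index = "nat + nat \<times> nat \<times> nat"

definition noise_env :: "(nat \<Rightarrow> real) \<Rightarrow> (nat \<Rightarrow> nat \<Rightarrow> nat \<Rightarrow> real) \<Rightarrow> noise_index \<Rightarrow> real" where
  "noise_env p0 xi = (\<lambda>k. case k of Inl j \<Rightarrow> p0 j | Inr (t, i, j) \<Rightarrow> xi t i j)"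

text \<open>The sum has exactly one nonzero term, the one of the child with the smallest first
  coordinate; written this way it is visibly a measurable function of finitely many coordinates.\<close>

definition selected_noise :: "nat \<Rightarrow> (noise_index \<Rightarrow> real) \<Rightarrow> nat \<Rightarrow> nat \<Rightarrow> real" where
  "selected_noise lam e s j =
     (\<Sum>l\<in>{1..lam}. if first_argmin lam (\<lambda>i. e (Inr (s, i, 1))) l then e (Inr (s, l, j)) else 0)"

primrec cum_path :: "nat \<Rightarrow> real \<Rightarrow> (noise_index \<Rightarrow> real) \<Rightarrow> nat \<Rightarrow> nat \<Rightarrow> real" where
  "cum_path lam c e 0 j = e (Inl j)"
| "cum_path lam c e (Suc t) j =
     (1 - c) * cum_path lam c e t j + sqrt (c * (2 - c)) * selected_noise lam e t j"

lemma selected_noise_eq: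
  "first_argmin lam (\<lambda>i. e (Inr (s, i, 1))) l \<Longrightarrow> selected_noise lam e s j = e (Inr (s, l, j))"
  unfolding selected_noise_def by (rule sum_first_argmin)

lemma csa_p_first_coordinate:
  assumes "lam \<ge> 1" "\<sigma>0 > 0"
  shows "csa_p n lam c d (\<lambda>x. x 1) X0 \<sigma>0 p0 xi t = cum_path lam c (noise_env p0 xi) t"
proof (induction t)
  case 0
  then show ?case by (simp add: csa_p_def noise_env_def fun_eq_iff)
next
  case (Suc t)
  obtain X p \<sigma> where st: "csa_state n lam c d (\<lambda>x. x 1) X0 \<sigma>0 p0 xi t = (X, p, \<sigma>)"
    by (metis prod_cases3)
  have "\<sigma> > 0" using csa_sigma_pos[OF assms(2), of n lam c d "\<lambda>x. x 1" X0 p0 xi t] st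
    by (simp add: csa_sigma_def)
  then have "first_argmin lam (\<lambda>i. noise_env p0 xi (Inr (t, i, 1))) (csa_sel (\<lambda>x. x 1) lam X \<sigma> (xi t))"
    using csa_sel_first_coordinate[OF _ assms(1)] by (simp add: noise_env_def)
  then have "xi t (csa_sel (\<lambda>x. x 1) lam X \<sigma> (xi t)) j = selected_noise lam (noise_env p0 xi) t j" for j
    by (simp add: selected_noise_eq noise_env_def)
  moreover have "p = cum_path lam c (noise_env p0 xi) t" using Suc st by (simp add: csa_p_def)
  ultimately show ?case unfolding csa_p_def csa_state.simps st Let_def prod.case by simp
qed

definition past_noise :: "nat \<Rightarrow> nat \<Rightarrow> nat \<Rightarrow> noise_index set" where
  "past_noise lam j t = {Inl j} \<union> {Inr (s, l, j') | s l j'. s < t \<and> l \<in> {1..lam} \<and> j' \<in> {1, j}}"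

definition current_noise :: "nat \<Rightarrow> nat \<Rightarrow> nat \<Rightarrow> noise_index set" where
  "current_noise lam j t = {Inr (t, l, j') | l j'. l \<in> {1..lam} \<and> j' \<in> {1, j}}"

lemma past_noise_mono: "t \<le> T \<Longrightarrow> past_noise lam j t \<subseteq> past_noise lam j T"
  unfolding past_noise_def by auto

lemma past_current_noise_disjoint: "past_noise lam j t \<inter> current_noise lam j t = {}"
  unfolding past_noise_def current_noise_def by auto

lemma selected_noise_cong:
  assumes "\<And>k. k \<in> current_noise lam j s \<Longrightarrow> e k = e' k"
  shows "selected_noise lam e s j = selected_noise lam e' s j"
  unfolding selected_noise_def
proof (rule sum.cong)
  fix l assume l: "l \<in> {1..lam}"
  then have "first_argmin lam (\<lambda>i. e (Inr (s, i, 1))) l = first_argmin lam (\<lambda>i. e' (Inr (s, i, 1))) l"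
    by (intro first_argmin_cong) (auto intro: assms simp: current_noise_def)
  moreover have "e (Inr (s, l, j)) = e' (Inr (s, l, j))"
    using l by (intro assms) (auto simp: current_noise_def)
  ultimately show "(if first_argmin lam (\<lambda>i. e (Inr (s, i, 1))) l then e (Inr (s, l, j)) else 0) =
        (if first_argmin lam (\<lambda>i. e' (Inr (s, i, 1))) l then e' (Inr (s, l, j)) else 0)"
    by simp
qed simp

lemma cum_path_cong:
  "(\<And>k. k \<in> past_noise lam j t \<Longrightarrow> e k = e' k) \<Longrightarrow> cum_path lam c e t j = cum_path lam c e' t j"
proof (induction t)
  case 0 then show ?case by (simp add: past_noise_def)
next
  case (Suc t)
  have "cum_path lam c e t j = cum_path lam c e' t j"
    using Suc by (intro Suc.IH) (auto simp: past_noise_def)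
  moreover have "selected_noise lam e t j = selected_noise lam e' t j"
    using Suc.prems by (intro selected_noise_cong) (auto simp: past_noise_def current_noise_def)
  ultimately show ?case by simp
qed

lemma measurable_component_PiM_borel:
  "(\<lambda>x. x k) \<in> borel_measurable (PiM A (\<lambda>_. (borel :: real measure)))"
proof (cases "k \<in> A")
  case False
  have "\<And>x. x \<in> space (PiM A (\<lambda>_. (borel :: real measure))) \<Longrightarrow> x k = undefined"
    using False by (auto simp: space_PiM intro: PiE_arb)
  then show ?thesis by (subst measurable_cong[where g="\<lambda>_. undefined"]) simp_all
qed simp

lemma pred_first_argmin[measurable]:
  fixes A :: "noise_index set"
  shows "Measurable.pred (PiM A (\<lambda>_. borel :: real measure)) (\<lambda>e. first_argmin lam (\<lambda>i. e (Inr (s, i, 1))) l)"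
proof (cases "l \<in> {1..lam}")
  case True
  have le: "Measurable.pred (PiM A (\<lambda>_. borel :: real measure)) (\<lambda>e. e a \<le> e b)" for a b
    unfolding pred_def by (intro borel_measurable_le measurable_component_PiM_borel)
  have less: "Measurable.pred (PiM A (\<lambda>_. borel :: real measure)) (\<lambda>e. e a < e b)" for a b
    unfolding pred_def by (intro borel_measurable_less measurable_component_PiM_borel)
  have eq: "(\<lambda>e. first_argmin lam (\<lambda>i. e (Inr (s, i, 1))) l) = (\<lambda>e.
      (\<forall>k\<in>{1..lam}. e (Inr (s, l, 1)) \<le> e (Inr (s, k, 1))) \<and> (\<forall>k\<in>{1..<l}. e (Inr (s, l, 1)) < e (Inr (s, k, 1))))"
    using True by (simp add: first_argmin_def fun_eq_iff)
  show ?thesis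
    unfolding eq by (intro pred_intros_logic pred_intros_finite le less finite_atLeastAtMost finite_atLeastLessThan)
next
  case False
  then have eq: "(\<lambda>e. first_argmin lam (\<lambda>i. e (Inr (s, i, 1))) l) = (\<lambda>e. False)"
    by (auto simp: first_argmin_def fun_eq_iff)
  show ?thesis unfolding eq by simp
qed

lemma borel_measurable_selected_noise[measurable]:
  fixes A :: "noise_index set"
  shows "(\<lambda>e. selected_noise lam e s j) \<in> borel_measurable (PiM A (\<lambda>_. (borel :: real measure)))"
  unfolding selected_noise_def
  by (intro borel_measurable_sum measurable_If measurable_component_PiM_borel measurable_const
      pred_first_argmin[unfolded pred_def]) simp

lemma borel_measurable_cum_path[measurable]:
  fixes A :: "noise_index set"
  shows "(\<lambda>e. cum_path lam c e t j) \<in> borel_measurable (PiM A (\<lambda>_. (borel :: real measure)))"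
  by (induction t) (simp_all add: measurable_component_PiM_borel)

lemma cumulation_coeffs_sq_sum:
  fixes c :: real
  assumes "0 \<le> c" "c \<le> 2"
  shows "(1 - c) ^ 2 + sqrt (c * (2 - c)) ^ 2 = 1"
proof -
  have "sqrt (c * (2 - c)) ^ 2 = c * (2 - c)" using assms by simp
  then show ?thesis by (simp add: power2_eq_square algebra_simps)
qed

locale csa_noise = prob_space M for M :: "'a measure" +
  fixes n lam :: nat and c :: real and p0 :: "nat \<Rightarrow> 'a \<Rightarrow> real"
    and xi :: "nat \<Rightarrow> nat \<Rightarrow> nat \<Rightarrow> 'a \<Rightarrow> real"
  assumes n_ge_1: "n \<ge> 1" and lam_ge_1: "lam \<ge> 1" and c_pos: "0 < c" and c_less_1: "c < 1"
    and indep: "indep_vars (\<lambda>_. borel)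
           (\<lambda>k. case k of Inl j \<Rightarrow> p0 j | Inr (t, i, j) \<Rightarrow> xi t i j)
           ({Inl j | j. j \<in> {1..n}} \<union> {Inr (t, i, j) | t i j. i \<in> {1..lam} \<and> j \<in> {1..n}})"
    and p0_std_normal: "\<forall>j\<in>{1..n}. distributed M lborel (p0 j) std_normal_density"
    and xi_std_normal: "\<forall>t. \<forall>i\<in>{1..lam}. \<forall>j\<in>{1..n}. distributed M lborel (xi t i j) std_normal_density"
begin

definition noise :: "noise_index \<Rightarrow> 'a \<Rightarrow> real" where
  "noise = (\<lambda>k. case k of Inl j \<Rightarrow> p0 j | Inr (t, i, j) \<Rightarrow> xi t i j)"

definition noise_indices :: "noise_index set" where
  "noise_indices = {Inl j | j. j \<in> {1..n}} \<union> {Inr (t, i, j) | t i j. i \<in> {1..lam} \<and> j \<in> {1..n}}"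

definition noise_on :: "noise_index set \<Rightarrow> 'a \<Rightarrow> noise_index \<Rightarrow> real" where
  "noise_on A \<omega> = restrict (\<lambda>k. noise k \<omega>) A"

definition path_coord :: "nat \<Rightarrow> nat \<Rightarrow> 'a \<Rightarrow> real" where
  "path_coord j t \<omega> = cum_path lam c (\<lambda>k. noise k \<omega>) t j"

definition sel_coord :: "nat \<Rightarrow> nat \<Rightarrow> 'a \<Rightarrow> real" where
  "sel_coord j t \<omega> = selected_noise lam (\<lambda>k. noise k \<omega>) t j"

lemma noise_env_eq_noise: "noise_env (\<lambda>j. p0 j \<omega>) (\<lambda>t i j. xi t i j \<omega>) = (\<lambda>k. noise k \<omega>)"
  unfolding noise_env_def noise_def by (auto split: sum.split prod.split)

lemma indep_noise: "indep_vars (\<lambda>_. borel) noise noise_indices"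
  unfolding noise_def noise_indices_def by (rule indep)

lemma measurable_noise_on:
  "A \<subseteq> noise_indices \<Longrightarrow> noise_on A \<in> measurable M (PiM A (\<lambda>_. borel))"
  using indep_noise unfolding noise_on_def indep_vars_def by (intro measurable_restrict) auto

lemma borel_measurable_comp_noise_on:
  "A \<subseteq> noise_indices \<Longrightarrow> F \<in> borel_measurable (PiM A (\<lambda>_. (borel :: real measure))) \<Longrightarrow>
    (\<lambda>\<omega>. F (noise_on A \<omega>)) \<in> borel_measurable M"
  using measurable_compose[OF measurable_noise_on] by blast

lemma indep_var_comp_noise_on:
  assumes "A \<subseteq> noise_indices" "B \<subseteq> noise_indices" "A \<inter> B = {}"
    and "F \<in> borel_measurable (PiM A (\<lambda>_. (borel :: real measure)))"
    and "G \<in> borel_measurable (PiM B (\<lambda>_. (borel :: real measure)))"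
  shows "indep_var borel (\<lambda>\<omega>. F (noise_on A \<omega>)) borel (\<lambda>\<omega>. G (noise_on B \<omega>))"
  using indep_var_compose[OF indep_var_restrict[OF indep_noise assms(3,1,2)] assms(4,5)]
  unfolding noise_on_def comp_def .

lemma noise_on_apply: "k \<in> A \<Longrightarrow> noise_on A \<omega> k = noise k \<omega>"
  by (simp add: noise_on_def)

lemma past_noise_subset: "j \<in> {1..n} \<Longrightarrow> past_noise lam j t \<subseteq> noise_indices"
  using n_ge_1 unfolding past_noise_def noise_indices_def by auto

lemma current_noise_subset: "j \<in> {1..n} \<Longrightarrow> current_noise lam j t \<subseteq> noise_indices"
  using n_ge_1 unfolding current_noise_def noise_indices_def by auto

lemma path_coord_eq_noise_on_past:
  "i \<le> t \<Longrightarrow> path_coord j i \<omega> = cum_path lam c (noise_on (past_noise lam j t) \<omega>) i j"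
  unfolding path_coord_def
  by (rule cum_path_cong) (use past_noise_mono[of i t lam j] in \<open>auto simp: noise_on_apply\<close>)

lemma sel_coord_eq_noise_on_current:
  "sel_coord j t \<omega> = selected_noise lam (noise_on (current_noise lam j t) \<omega>) t j"
  unfolding sel_coord_def by (rule selected_noise_cong) (simp add: noise_on_apply)

lemma path_coord_0: "path_coord j 0 = p0 j"
  by (simp add: path_coord_def noise_def fun_eq_iff)

lemma path_coord_Suc:
  "path_coord j (Suc t) \<omega> = (1 - c) * path_coord j t \<omega> + sqrt (c * (2 - c)) * sel_coord j t \<omega>"
  by (simp add: path_coord_def sel_coord_def)

lemma sel_coord_eq_sum:
  "sel_coord j t \<omega> = (\<Sum>l\<in>{1..lam}. if first_argmin lam (\<lambda>i. xi t i 1 \<omega>) l then xi t l j \<omega> else 0)"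
  unfolding sel_coord_def selected_noise_def noise_def by (simp cong: if_cong)

lemma borel_measurable_sel_coord:
  assumes "j \<in> {1..n}" shows "sel_coord j t \<in> borel_measurable M"
proof -
  have "sel_coord j t = (\<lambda>\<omega>. selected_noise lam (noise_on (current_noise lam j t) \<omega>) t j)"
    using sel_coord_eq_noise_on_current[of j t] by auto
  then show ?thesis
    using borel_measurable_comp_noise_on[OF current_noise_subset[OF assms]
        borel_measurable_selected_noise]
    by simp
qed

lemma has_moments_xi: "i \<in> {1..lam} \<Longrightarrow> j \<in> {1..n} \<Longrightarrow> has_moments M (xi t i j)"
  using has_moments_std_normal xi_std_normal by blast

lemma has_moments_sel_coord:
  assumes j: "j \<in> {1..n}" shows "has_moments M (sel_coord j t)"
proof (rule has_moments_dominated[OF borel_measurable_sel_coord[OF j]])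
  show "has_moments M (\<lambda>\<omega>. \<Sum>l\<in>{1..lam}. \<bar>xi t l j \<omega>\<bar>)"
    using has_moments_xi[OF _ j] by (intro has_moments_sum has_moments_abs) simp
  fix \<omega>
  have "\<bar>sel_coord j t \<omega>\<bar> \<le> (\<Sum>l\<in>{1..lam}. \<bar>if first_argmin lam (\<lambda>i. xi t i 1 \<omega>) l then xi t l j \<omega> else 0\<bar>)"
    unfolding sel_coord_eq_sum by (rule sum_abs)
  also have "\<dots> \<le> (\<Sum>l\<in>{1..lam}. \<bar>xi t l j \<omega>\<bar>)" by (intro sum_mono) simp
  finally show "\<bar>sel_coord j t \<omega>\<bar> \<le> \<bar>\<Sum>l\<in>{1..lam}. \<bar>xi t l j \<omega>\<bar>\<bar>" by simp
qed

lemma has_moments_path_coord: "j \<in> {1..n} \<Longrightarrow> has_moments M (path_coord j t)"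
proof (induction t)
  case 0 then show ?case using p0_std_normal by (simp add: path_coord_0 has_moments_std_normal)
next
  case (Suc t)
  then have "has_moments M (\<lambda>\<omega>. (1 - c) * path_coord j t \<omega> + sqrt (c * (2 - c)) * sel_coord j t \<omega>)"
    by (intro has_moments_add has_moments_cmult has_moments_sel_coord)
  then show ?case by (simp add: path_coord_Suc[abs_def])
qed

text \<open>Selection only looks at the first coordinates, so for j \<ge> 2 the selected j-th coordinate is
  a mixture, with the selection probabilities as weights, of independent standard normals.\<close>

lemma integral_sel_coord_power:
  assumes j: "j \<in> {2..n}"
  shows "(\<integral>\<omega>. sel_coord j t \<omega> ^ q \<partial>M) = std_normal_moment q"
proof -
  have j1: "j \<in> {1..n}" and j_ne_1: "j \<noteq> 1" using j by auto
  define A :: "noise_index set" where "A = {Inr (t, i, 1) | i. i \<in> {1..lam}}"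
  have A: "A \<subseteq> noise_indices" using n_ge_1 by (auto simp: A_def noise_indices_def)
  define F where "F l e = (if first_argmin lam (\<lambda>i. e (Inr (t, i, 1))) l then 1 else (0::real))"
    for l and e :: "noise_index \<Rightarrow> real"
  define ind where "ind l \<omega> = F l (noise_on A \<omega>)" for l \<omega>
  have F_measurable: "F l \<in> borel_measurable (PiM A (\<lambda>_. borel))" for l
    unfolding F_def by (intro measurable_If measurable_const pred_first_argmin[unfolded pred_def]) auto
  have ind_eq: "ind l \<omega> = (if first_argmin lam (\<lambda>i. xi t i 1 \<omega>) l then 1 else 0)"
    if l: "l \<in> {1..lam}" for l \<omega>
  proof -
    have "first_argmin lam (\<lambda>i. xi t i 1 \<omega>) l = first_argmin lam (\<lambda>i. noise_on A \<omega> (Inr (t, i, 1))) l"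
      by (rule first_argmin_cong[OF _ l]) (auto simp: noise_on_apply A_def noise_def)
    then show ?thesis by (simp add: ind_def F_def)
  qed
  have ind_moments: "has_moments M (ind l)" for l
    unfolding ind_def
    by (rule has_moments_bounded[OF borel_measurable_comp_noise_on[OF A F_measurable], where B=1])
      (simp add: F_def)
  have xi_power_moments: "has_moments M (\<lambda>\<omega>. xi t l j \<omega> ^ q)" if "l \<in> {1..lam}" for l
    by (intro has_moments_power has_moments_xi that j1)
  have sel_power: "sel_coord j t \<omega> ^ q = (\<Sum>l\<in>{1..lam}. ind l \<omega> * xi t l j \<omega> ^ q)" for \<omega>
  proof -
    obtain l0 where l0: "first_argmin lam (\<lambda>i. xi t i 1 \<omega>) l0"
      using first_argmin_exists[OF lam_ge_1] by blast
    have "(\<Sum>l\<in>{1..lam}. ind l \<omega> * xi t l j \<omega> ^ q)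
        = (\<Sum>l\<in>{1..lam}. if first_argmin lam (\<lambda>i. xi t i 1 \<omega>) l then xi t l j \<omega> ^ q else 0)"
      by (intro sum.cong) (simp_all add: ind_eq)
    also have "\<dots> = xi t l0 j \<omega> ^ q" by (rule sum_first_argmin[OF l0])
    finally show ?thesis
      unfolding sel_coord_eq_sum sum_first_argmin[OF l0] by simp
  qed
  have ind_sum: "(\<Sum>l\<in>{1..lam}. ind l \<omega>) = 1" for \<omega>
  proof -
    obtain l0 where l0: "first_argmin lam (\<lambda>i. xi t i 1 \<omega>) l0"
      using first_argmin_exists[OF lam_ge_1] by blast
    have "(\<Sum>l\<in>{1..lam}. ind l \<omega>) = (\<Sum>l\<in>{1..lam}. if first_argmin lam (\<lambda>i. xi t i 1 \<omega>) l then 1 else 0)"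
      by (intro sum.cong) (simp_all add: ind_eq)
    also have "\<dots> = 1" by (rule sum_first_argmin[OF l0])
    finally show ?thesis .
  qed
  have integral_ind_mult: "(\<integral>\<omega>. ind l \<omega> * xi t l j \<omega> ^ q \<partial>M) = (\<integral>\<omega>. ind l \<omega> \<partial>M) * std_normal_moment q"
    if l: "l \<in> {1..lam}" for l
  proof -
    define B :: "noise_index set" where "B = {Inr (t, l, j)}"
    have B: "B \<subseteq> noise_indices" using l j1 by (auto simp: B_def noise_indices_def)
    have AB: "A \<inter> B = {}" using j_ne_1 by (auto simp: A_def B_def)
    have G: "(\<lambda>e. e (Inr (t, l, j)) ^ q) \<in> borel_measurable (PiM B (\<lambda>_. borel :: real measure))"
      by (intro borel_measurable_power measurable_component_PiM_borel)
    have G_eq: "(\<lambda>\<omega>. noise_on B \<omega> (Inr (t, l, j)) ^ q) = (\<lambda>\<omega>. xi t l j \<omega> ^ q)"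
      by (auto simp: noise_on_apply B_def noise_def)
    have "indep_var borel (ind l) borel (\<lambda>\<omega>. xi t l j \<omega> ^ q)"
      using indep_var_comp_noise_on[OF A B AB F_measurable G] unfolding G_eq ind_def[abs_def] .
    then have "(\<integral>\<omega>. ind l \<omega> * xi t l j \<omega> ^ q \<partial>M) = (\<integral>\<omega>. ind l \<omega> \<partial>M) * (\<integral>\<omega>. xi t l j \<omega> ^ q \<partial>M)"
      by (intro indep_var_lebesgue_integral has_moments_integrable ind_moments xi_power_moments l)
    moreover have "distributed M lborel (xi t l j) std_normal_density" using xi_std_normal l j1 by blast
    ultimately show ?thesis using integral_power_std_normal[of M "xi t l j"] by simp
  qed
  have "(\<integral>\<omega>. sel_coord j t \<omega> ^ q \<partial>M) = (\<Sum>l\<in>{1..lam}. \<integral>\<omega>. ind l \<omega> * xi t l j \<omega> ^ q \<partial>M)"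
    unfolding sel_power
    by (intro Bochner_Integration.integral_sum has_moments_integrable has_moments_mult ind_moments
        xi_power_moments)
  also have "\<dots> = (\<Sum>l\<in>{1..lam}. \<integral>\<omega>. ind l \<omega> \<partial>M) * std_normal_moment q"
    by (simp add: integral_ind_mult sum_distrib_right)
  also have "(\<Sum>l\<in>{1..lam}. \<integral>\<omega>. ind l \<omega> \<partial>M) = (\<integral>\<omega>. (\<Sum>l\<in>{1..lam}. ind l \<omega>) \<partial>M)"
    by (intro Bochner_Integration.integral_sum[symmetric] has_moments_integrable ind_moments)
  also have "\<dots> = 1" unfolding ind_sum by (simp add: prob_space)
  finally show ?thesis by simp
qed

lemma integral_past_mult_sel_coord_power:
  assumes j: "j \<in> {2..n}"
    and F: "F \<in> borel_measurable (PiM (past_noise lam j t) (\<lambda>_. (borel :: real measure)))"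
    and F_moments: "has_moments M (\<lambda>\<omega>. F (noise_on (past_noise lam j t) \<omega>))"
  shows "(\<integral>\<omega>. F (noise_on (past_noise lam j t) \<omega>) * sel_coord j t \<omega> ^ q \<partial>M)
      = (\<integral>\<omega>. F (noise_on (past_noise lam j t) \<omega>) \<partial>M) * std_normal_moment q"
proof -
  have j1: "j \<in> {1..n}" using j by auto
  have "indep_var borel (\<lambda>\<omega>. F (noise_on (past_noise lam j t) \<omega>))
      borel (\<lambda>\<omega>. (\<lambda>e. selected_noise lam e t j ^ q) (noise_on (current_noise lam j t) \<omega>))"
    by (intro indep_var_comp_noise_on past_noise_subset current_noise_subset j1
        past_current_noise_disjoint F borel_measurable_power borel_measurable_selected_noise)
  then have "indep_var borel (\<lambda>\<omega>. F (noise_on (past_noise lam j t) \<omega>)) borel (\<lambda>\<omega>. sel_coord j t \<omega> ^ q)"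
    by (simp add: sel_coord_eq_noise_on_current)
  then have "(\<integral>\<omega>. F (noise_on (past_noise lam j t) \<omega>) * sel_coord j t \<omega> ^ q \<partial>M)
      = (\<integral>\<omega>. F (noise_on (past_noise lam j t) \<omega>) \<partial>M) * (\<integral>\<omega>. sel_coord j t \<omega> ^ q \<partial>M)"
    by (intro indep_var_lebesgue_integral has_moments_integrable F_moments has_moments_power
        has_moments_sel_coord j1)
  then show ?thesis using integral_sel_coord_power[OF j] by simp
qed

text \<open>Expand ((1 - c) [p_t]_j + sqrt (c (2 - c)) [xi*_t]_j)^m binomially; the selected noise is
  independent of the past, so each term factorises.\<close>

lemma integral_past_mult_path_coord_Suc_power:
  assumes j: "j \<in> {2..n}"
    and F: "F \<in> borel_measurable (PiM (past_noise lam j t) (\<lambda>_. (borel :: real measure)))"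
    and F_moments: "has_moments M (\<lambda>\<omega>. F (noise_on (past_noise lam j t) \<omega>))"
  shows "(\<integral>\<omega>. F (noise_on (past_noise lam j t) \<omega>) * path_coord j (Suc t) \<omega> ^ m \<partial>M) =
     (\<Sum>i\<le>m. real (m choose i) * (1 - c) ^ i * sqrt (c * (2 - c)) ^ (m - i) *
        (\<integral>\<omega>. F (noise_on (past_noise lam j t) \<omega>) * path_coord j t \<omega> ^ i \<partial>M) * std_normal_moment (m - i))"
proof -
  have j1: "j \<in> {1..n}" using j by auto
  define a where "a = 1 - c"
  define b where "b = sqrt (c * (2 - c))"
  define X where "X \<omega> = F (noise_on (past_noise lam j t) \<omega>)" for \<omega>
  have X_moments: "has_moments M X" using F_moments by (simp add: X_def[abs_def])
  have expand: "X \<omega> * path_coord j (Suc t) \<omega> ^ m = (\<Sum>i\<le>m. (real (m choose i) * a ^ i * b ^ (m - i)) *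
      ((X \<omega> * path_coord j t \<omega> ^ i) * sel_coord j t \<omega> ^ (m - i)))" for \<omega>
  proof -
    have "path_coord j (Suc t) \<omega> ^ m = (a * path_coord j t \<omega> + b * sel_coord j t \<omega>) ^ m"
      by (simp add: path_coord_Suc a_def b_def)
    also have "\<dots> = (\<Sum>i\<le>m. real (m choose i) * (a * path_coord j t \<omega>) ^ i * (b * sel_coord j t \<omega>) ^ (m - i))"
      by (rule binomial_ring)
    finally show ?thesis by (simp add: sum_distrib_left power_mult_distrib algebra_simps)
  qed
  have term_moments: "has_moments M (\<lambda>\<omega>. (X \<omega> * path_coord j t \<omega> ^ i) * sel_coord j t \<omega> ^ (m - i))" for i
    by (intro has_moments_mult has_moments_power X_moments has_moments_path_coord has_moments_sel_coord j1)
  have integral_term: "(\<integral>\<omega>. (X \<omega> * path_coord j t \<omega> ^ i) * sel_coord j t \<omega> ^ (m - i) \<partial>M)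
      = (\<integral>\<omega>. X \<omega> * path_coord j t \<omega> ^ i \<partial>M) * std_normal_moment (m - i)" for i
  proof -
    define F' where "F' e = F e * cum_path lam c e t j ^ i" for e
    have F': "F' \<in> borel_measurable (PiM (past_noise lam j t) (\<lambda>_. borel))"
      unfolding F'_def by (intro borel_measurable_times borel_measurable_power F borel_measurable_cum_path)
    have eq: "F' (noise_on (past_noise lam j t) \<omega>) = X \<omega> * path_coord j t \<omega> ^ i" for \<omega>
      by (simp add: F'_def X_def path_coord_eq_noise_on_past[OF order_refl])
    have "has_moments M (\<lambda>\<omega>. F' (noise_on (past_noise lam j t) \<omega>))"
      unfolding eq by (intro has_moments_mult has_moments_power X_moments has_moments_path_coord j1)
    from integral_past_mult_sel_coord_power[OF j F' this] show ?thesis unfolding eq .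
  qed
  have "(\<integral>\<omega>. X \<omega> * path_coord j (Suc t) \<omega> ^ m \<partial>M) = (\<Sum>i\<le>m. \<integral>\<omega>. (real (m choose i) * a ^ i * b ^ (m - i)) *
      ((X \<omega> * path_coord j t \<omega> ^ i) * sel_coord j t \<omega> ^ (m - i)) \<partial>M)"
    unfolding expand
    by (intro Bochner_Integration.integral_sum Bochner_Integration.integrable_mult_right
        has_moments_integrable term_moments)
  also have "\<dots> = (\<Sum>i\<le>m. (real (m choose i) * a ^ i * b ^ (m - i)) *
      ((\<integral>\<omega>. X \<omega> * path_coord j t \<omega> ^ i \<partial>M) * std_normal_moment (m - i)))"
    by (simp only: Bochner_Integration.integral_mult_right_zero integral_term)
  finally show ?thesis unfolding X_def a_def b_def by (simp add: algebra_simps)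
qed

lemma integral_path_coord_Suc_power:
  assumes "j \<in> {2..n}"
  shows "(\<integral>\<omega>. path_coord j (Suc t) \<omega> ^ m \<partial>M) =
     (\<Sum>i\<le>m. real (m choose i) * (1 - c) ^ i * sqrt (c * (2 - c)) ^ (m - i) *
        (\<integral>\<omega>. path_coord j t \<omega> ^ i \<partial>M) * std_normal_moment (m - i))"
  using integral_past_mult_path_coord_Suc_power[OF assms, of "\<lambda>_. 1" t m]
  by (simp add: has_moments_const)

lemma sum_atMost_expand:
  fixes f :: "nat \<Rightarrow> real"
  shows "(\<Sum>i\<le>1. f i) = f 0 + f 1" "(\<Sum>i\<le>2. f i) = f 0 + f 1 + f 2"
    "(\<Sum>i\<le>4. f i) = f 0 + f 1 + f 2 + f 3 + f 4"
  by (simp_all add: numeral_eq_Suc)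

lemma choose_values: "(2::nat) choose 1 = 2" "(4::nat) choose 1 = 4" "(4::nat) choose 2 = 6"
  "(4::nat) choose 3 = 4"
  by (simp_all add: numeral_eq_Suc)

text \<open>The identity (1 - c)^2 + sqrt (c (2 - c))^2 = 1 is what preserves the second moment and the
  bound 3 on the fourth.\<close>

lemma path_coord_moments:
  assumes j: "j \<in> {2..n}"
  shows "(\<integral>\<omega>. path_coord j t \<omega> \<partial>M) = 0 \<and> (\<integral>\<omega>. path_coord j t \<omega> ^ 2 \<partial>M) = 1
    \<and> (\<integral>\<omega>. path_coord j t \<omega> ^ 4 \<partial>M) \<le> 3"
proof (induction t)
  case 0
  have p0: "distributed M lborel (p0 j) std_normal_density" using p0_std_normal j by auto
  show ?case
    using integral_power_std_normal[OF p0, of 1] integral_power_std_normal[OF p0, of 2]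
      integral_power_std_normal[OF p0, of 4]
    by (simp add: path_coord_0 std_normal_moment_values)
next
  case (Suc t)
  define a where "a = 1 - c"
  define b where "b = sqrt (c * (2 - c))"
  have ab: "a ^ 2 + b ^ 2 = 1" using cumulation_coeffs_sq_sum c_pos c_less_1 by (simp add: a_def b_def)
  have E0: "(\<integral>\<omega>. path_coord j t \<omega> ^ 0 \<partial>M) = 1" by (simp add: prob_space)
  have E1: "(\<integral>\<omega>. path_coord j t \<omega> ^ 1 \<partial>M) = 0" and E2: "(\<integral>\<omega>. path_coord j t \<omega> ^ 2 \<partial>M) = 1"
    and E4: "(\<integral>\<omega>. path_coord j t \<omega> ^ 4 \<partial>M) \<le> 3" using Suc by simp_all
  have "(\<integral>\<omega>. path_coord j (Suc t) \<omega> ^ 1 \<partial>M) = 0"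
    unfolding integral_path_coord_Suc_power[OF j, of t 1] sum_atMost_expand
    using E0 E1 by (simp add: std_normal_moment_values)
  moreover have "(\<integral>\<omega>. path_coord j (Suc t) \<omega> ^ 2 \<partial>M) = a ^ 2 + b ^ 2"
    unfolding integral_path_coord_Suc_power[OF j, of t 2] sum_atMost_expand
    using E0 E1 E2 by (simp add: std_normal_moment_values choose_values a_def b_def)
  moreover have "(\<integral>\<omega>. path_coord j (Suc t) \<omega> ^ 4 \<partial>M)
      = 3 * b ^ 4 + 6 * a ^ 2 * b ^ 2 + a ^ 4 * (\<integral>\<omega>. path_coord j t \<omega> ^ 4 \<partial>M)"
    unfolding integral_path_coord_Suc_power[OF j, of t 4] sum_atMost_expand
    using E0 E1 E2 by (simp add: std_normal_moment_values choose_values a_def b_def)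
  moreover have "a ^ 4 * (\<integral>\<omega>. path_coord j t \<omega> ^ 4 \<partial>M) \<le> a ^ 4 * 3"
    using E4 by (intro mult_left_mono) simp_all
  moreover have "3 * (a ^ 2 + b ^ 2) ^ 2 = 3 * b ^ 4 + 6 * a ^ 2 * b ^ 2 + a ^ 4 * 3"
    by (simp add: eval_nat_numeral algebra_simps)
  ultimately show ?case using ab by simp
qed

definition sqsum :: "nat \<Rightarrow> nat \<Rightarrow> 'a \<Rightarrow> real" where
  "sqsum j t \<omega> = (\<Sum>i=1..t. path_coord j i \<omega> ^ 2)"

definition sqsum_dev :: "nat \<Rightarrow> nat \<Rightarrow> 'a \<Rightarrow> real" where
  "sqsum_dev j t \<omega> = sqsum j t \<omega> - real t"

lemma sqsum_dev_0: "sqsum_dev j 0 \<omega> = 0"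
  by (simp add: sqsum_dev_def sqsum_def)

lemma sqsum_dev_Suc: "sqsum_dev j (Suc t) \<omega> = sqsum_dev j t \<omega> + (path_coord j (Suc t) \<omega> ^ 2 - 1)"
  by (simp add: sqsum_dev_def sqsum_def)

lemma has_moments_sqsum_dev: "j \<in> {1..n} \<Longrightarrow> has_moments M (sqsum_dev j t)"
  unfolding sqsum_dev_def[abs_def] sqsum_def
  by (intro has_moments_diff has_moments_sum has_moments_power has_moments_path_coord has_moments_const)

lemma sqsum_dev_eq_noise_on_past:
  "sqsum_dev j t \<omega> = (\<lambda>e. (\<Sum>i=1..t. cum_path lam c e i j ^ 2) - real t) (noise_on (past_noise lam j t) \<omega>)"
  unfolding sqsum_dev_def sqsum_def by (auto simp: path_coord_eq_noise_on_past intro!: sum.cong)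

lemma borel_measurable_sqsum_dev_fun:
  "(\<lambda>e. (\<Sum>i=1..t. cum_path lam c e i j ^ 2) - real t) \<in> borel_measurable (PiM A (\<lambda>_. borel))"
  by (intro borel_measurable_diff borel_measurable_sum borel_measurable_power borel_measurable_cum_path
      measurable_const) simp_all

lemma integral_sqsum_dev:
  assumes j: "j \<in> {2..n}" shows "(\<integral>\<omega>. sqsum_dev j t \<omega> \<partial>M) = 0"
proof -
  have j1: "j \<in> {1..n}" using j by auto
  have "(\<integral>\<omega>. sqsum j t \<omega> \<partial>M) = (\<Sum>i=1..t. \<integral>\<omega>. path_coord j i \<omega> ^ 2 \<partial>M)"
    unfolding sqsum_def
    by (intro Bochner_Integration.integral_sum has_moments_integrable has_moments_power
        has_moments_path_coord j1)
  also have "\<dots> = real t" using path_coord_moments[OF j] by simp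
  moreover have "integrable M (sqsum j t)"
    unfolding sqsum_def[abs_def]
    by (intro Bochner_Integration.integrable_sum has_moments_integrable has_moments_power
        has_moments_path_coord j1)
  ultimately show ?thesis by (simp add: sqsum_dev_def[abs_def] prob_space)
qed

lemma integral_sqsum_dev_mult_path_coord_Suc_sq:
  assumes j: "j \<in> {2..n}"
  shows "(\<integral>\<omega>. sqsum_dev j t \<omega> * path_coord j (Suc t) \<omega> ^ 2 \<partial>M)
    = (1 - c) ^ 2 * (\<integral>\<omega>. sqsum_dev j t \<omega> * path_coord j t \<omega> ^ 2 \<partial>M)"
proof -
  have j1: "j \<in> {1..n}" using j by auto
  have F_moments: "has_moments M (\<lambda>\<omega>. (\<lambda>e. (\<Sum>i=1..t. cum_path lam c e i j ^ 2) - real t)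
      (noise_on (past_noise lam j t) \<omega>))"
    unfolding sqsum_dev_eq_noise_on_past[symmetric] using has_moments_sqsum_dev[OF j1]
    by (simp add: sqsum_dev_def[abs_def])
  have "(\<integral>\<omega>. sqsum_dev j t \<omega> * path_coord j (Suc t) \<omega> ^ 2 \<partial>M) =
     (\<Sum>i\<le>2. real (2 choose i) * (1 - c) ^ i * sqrt (c * (2 - c)) ^ (2 - i) *
        (\<integral>\<omega>. sqsum_dev j t \<omega> * path_coord j t \<omega> ^ i \<partial>M) * std_normal_moment (2 - i))"
    using integral_past_mult_path_coord_Suc_power[OF j borel_measurable_sqsum_dev_fun F_moments]
    unfolding sqsum_dev_eq_noise_on_past[symmetric] .
  then show ?thesis
    unfolding sum_atMost_expand
    using integral_sqsum_dev[OF j, of t] by (simp add: std_normal_moment_values choose_values)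
qed

text \<open>Each step damps the correlation of the past deviation with the current square by (1 - c)^2,
  so it stays bounded; this is what makes the variance below grow only linearly.\<close>

lemma integral_sqsum_dev_mult_path_coord_sq_le:
  assumes j: "j \<in> {2..n}"
  shows "(\<integral>\<omega>. sqsum_dev j t \<omega> * path_coord j t \<omega> ^ 2 \<partial>M) \<le> 2 / (1 - (1 - c) ^ 2)"
proof (induction t)
  case 0 then show ?case using c_pos c_less_1 by (simp add: sqsum_dev_0 field_simps power2_eq_square)
next
  case (Suc t)
  have j1: "j \<in> {1..n}" using j by auto
  define q where "q = (1 - c) ^ 2"
  have "(1 - c) ^ 2 < 1 ^ 2" by (rule power_strict_mono) (use c_pos c_less_1 in auto)
  then have q: "0 \<le> q" "q < 1" by (simp_all add: q_def)
  let ?Z = "path_coord j (Suc t)"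
  have "(\<integral>\<omega>. sqsum_dev j (Suc t) \<omega> * ?Z \<omega> ^ 2 \<partial>M)
      = (\<integral>\<omega>. sqsum_dev j t \<omega> * ?Z \<omega> ^ 2 + (?Z \<omega> ^ 4 - ?Z \<omega> ^ 2) \<partial>M)"
    unfolding sqsum_dev_Suc by (intro Bochner_Integration.integral_cong) (simp_all add: algebra_simps eval_nat_numeral)
  also have "\<dots> = (\<integral>\<omega>. sqsum_dev j t \<omega> * ?Z \<omega> ^ 2 \<partial>M) + ((\<integral>\<omega>. ?Z \<omega> ^ 4 \<partial>M) - (\<integral>\<omega>. ?Z \<omega> ^ 2 \<partial>M))"
    by (subst Bochner_Integration.integral_add,
        (intro has_moments_integrable has_moments_mult has_moments_diff has_moments_power
          has_moments_sqsum_dev has_moments_path_coord j1)+,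
        subst Bochner_Integration.integral_diff,
        (intro has_moments_integrable has_moments_power has_moments_path_coord j1)+, rule refl)
  also have "\<dots> \<le> q * (\<integral>\<omega>. sqsum_dev j t \<omega> * path_coord j t \<omega> ^ 2 \<partial>M) + 2"
    using integral_sqsum_dev_mult_path_coord_Suc_sq[OF j, of t] path_coord_moments[OF j, of "Suc t"]
    by (simp add: q_def)
  also have "\<dots> \<le> q * (2 / (1 - q)) + 2"
    using mult_left_mono[OF Suc q(1)] by (simp add: q_def)
  also have "\<dots> = 2 / (1 - q)" using q by (simp add: field_simps)
  finally show ?case by (simp add: q_def)
qed

lemma integral_sqsum_dev_sq_le:
  assumes j: "j \<in> {2..n}"
  shows "(\<integral>\<omega>. sqsum_dev j t \<omega> ^ 2 \<partial>M) \<le> (2 * (1 - c) ^ 2 * (2 / (1 - (1 - c) ^ 2)) + 2) * real t"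
proof (induction t)
  case 0 then show ?case by (simp add: sqsum_dev_0)
next
  case (Suc t)
  have j1: "j \<in> {1..n}" using j by auto
  define q where "q = (1 - c) ^ 2"
  define K where "K = 2 / (1 - q)"
  have "0 \<le> q" by (simp add: q_def)
  let ?T = "sqsum_dev j t" and ?Z = "path_coord j (Suc t)"
  have integrable: "integrable M (\<lambda>\<omega>. ?T \<omega> ^ 2)" "integrable M (\<lambda>\<omega>. ?T \<omega> * ?Z \<omega> ^ 2)"
    "integrable M ?T" "integrable M (\<lambda>\<omega>. ?Z \<omega> ^ 4)" "integrable M (\<lambda>\<omega>. ?Z \<omega> ^ 2)"
    by (intro has_moments_integrable has_moments_mult has_moments_power has_moments_sqsum_dev
        has_moments_path_coord j1)+
  have "(\<integral>\<omega>. sqsum_dev j (Suc t) \<omega> ^ 2 \<partial>M)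
      = (\<integral>\<omega>. ?T \<omega> ^ 2 + 2 * (?T \<omega> * ?Z \<omega> ^ 2) - 2 * ?T \<omega> + (?Z \<omega> ^ 4 - 2 * ?Z \<omega> ^ 2 + 1) \<partial>M)"
    unfolding sqsum_dev_Suc by (intro Bochner_Integration.integral_cong) (simp_all add: algebra_simps eval_nat_numeral)
  also have "\<dots> = (\<integral>\<omega>. ?T \<omega> ^ 2 \<partial>M) + 2 * (\<integral>\<omega>. ?T \<omega> * ?Z \<omega> ^ 2 \<partial>M) - 2 * (\<integral>\<omega>. ?T \<omega> \<partial>M)
      + ((\<integral>\<omega>. ?Z \<omega> ^ 4 \<partial>M) - 2 * (\<integral>\<omega>. ?Z \<omega> ^ 2 \<partial>M) + 1)"
    using integrable by (simp add: prob_space)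
  also have "\<dots> \<le> (2 * q * K + 2) * real t + 2 * (q * K) + 2"
  proof -
    have "(\<integral>\<omega>. ?T \<omega> * ?Z \<omega> ^ 2 \<partial>M) \<le> q * K"
      unfolding integral_sqsum_dev_mult_path_coord_Suc_sq[OF j] q_def K_def
      by (intro mult_left_mono integral_sqsum_dev_mult_path_coord_sq_le j) simp
    then show ?thesis
      using Suc integral_sqsum_dev[OF j, of t] path_coord_moments[OF j, of "Suc t"]
      by (simp add: q_def K_def)
  qed
  also have "\<dots> = (2 * q * K + 2) * real (Suc t)" by (simp add: algebra_simps)
  finally show ?case by (simp add: q_def K_def)
qed

text \<open>Chebyshev along the squares: the variance bound O(t) makes the squared relative deviations
  summable along t = (m + 1)^2.\<close>

lemma AE_sqsum_squares_LIMSEQ: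
  assumes j: "j \<in> {2..n}"
  shows "AE \<omega> in M. (\<lambda>m. sqsum j ((m + 1) ^ 2) \<omega> / real ((m + 1) ^ 2)) \<longlonglongrightarrow> 1"
proof -
  have j1: "j \<in> {1..n}" using j by auto
  define C where "C = 2 * (1 - c) ^ 2 * (2 / (1 - (1 - c) ^ 2)) + 2"
  define N where "N m = (m + 1) ^ 2" for m :: nat
  define g where "g m \<omega> = (sqsum_dev j (N m) \<omega> / real (N m)) ^ 2" for m \<omega>
  have N_pos: "real (N m) > 0" for m by (simp add: N_def)
  have g_integrable: "integrable M (g m)" for m
    unfolding g_def[abs_def] divide_inverse
    by (intro has_moments_integrable has_moments_power has_moments_mult has_moments_sqsum_dev
        has_moments_const j1)
  have integral_g: "(\<integral>\<omega>. g m \<omega> \<partial>M) \<le> C * inverse (real (Suc m) ^ 2)" for m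
  proof -
    have "(\<integral>\<omega>. g m \<omega> \<partial>M) = (\<integral>\<omega>. sqsum_dev j (N m) \<omega> ^ 2 \<partial>M) / real (N m) ^ 2"
      unfolding g_def by (simp add: power_divide)
    also have "\<dots> \<le> C * real (N m) / real (N m) ^ 2"
      using integral_sqsum_dev_sq_le[OF j, of "N m"] by (intro divide_right_mono) (simp_all add: C_def)
    also have "\<dots> = C / real (N m)"
      using N_pos[of m] by (simp add: power2_eq_square)
    also have "\<dots> = C * inverse (real (Suc m) ^ 2)"
      by (simp add: N_def divide_inverse)
    finally show ?thesis .
  qed
  have "summable (\<lambda>m. inverse (real m ^ 2))" by (rule inverse_power_summable) simp
  then have "summable (\<lambda>m. C * inverse (real (Suc m) ^ 2))"
    by (subst (asm) summable_Suc_iff[symmetric]) (rule summable_mult)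
  then have "summable (\<lambda>m. \<integral>\<omega>. g m \<omega> \<partial>M)"
    by (rule summable_comparison_test[rotated])
      (use integral_g in \<open>auto simp: g_def intro!: exI[of _ 0]\<close>)
  then have "AE \<omega> in M. (\<lambda>m. g m \<omega>) \<longlonglongrightarrow> 0"
    by (intro AE_LIMSEQ_zero_if_summable_integral g_integrable) (simp add: g_def)
  then show ?thesis
  proof (rule AE_mp, intro AE_I2 impI)
    fix \<omega> assume "(\<lambda>m. g m \<omega>) \<longlonglongrightarrow> 0"
    then have "(\<lambda>m. sqrt (g m \<omega>)) \<longlonglongrightarrow> 0" using tendsto_real_sqrt by fastforce
    then have "(\<lambda>m. \<bar>sqsum_dev j (N m) \<omega> / real (N m)\<bar>) \<longlonglongrightarrow> 0" by (simp add: g_def)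
    then have "(\<lambda>m. sqsum_dev j (N m) \<omega> / real (N m)) \<longlonglongrightarrow> 0" by (rule tendsto_rabs_zero_cancel)
    then have "(\<lambda>m. sqsum_dev j (N m) \<omega> / real (N m) + 1) \<longlonglongrightarrow> 0 + 1" by (intro tendsto_add tendsto_const)
    moreover have "sqsum_dev j (N m) \<omega> / real (N m) + 1 = sqsum j ((m + 1) ^ 2) \<omega> / real ((m + 1) ^ 2)" for m
      using N_pos[of m] by (simp add: sqsum_dev_def N_def field_simps)
    ultimately show "(\<lambda>m. sqsum j ((m + 1) ^ 2) \<omega> / real ((m + 1) ^ 2)) \<longlonglongrightarrow> 1" by simp
  qed
qed

lemma AE_sqsum_LIMSEQ:
  assumes "j \<in> {2..n}" shows "AE \<omega> in M. (\<lambda>t. sqsum j t \<omega> / real t) \<longlonglongrightarrow> 1"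
  using AE_sqsum_squares_LIMSEQ[OF assms]
proof (rule AE_mp, intro AE_I2 impI LIMSEQ_average_if_LIMSEQ_average_squares)
  show "mono (\<lambda>t. sqsum j t \<omega>)" "0 \<le> sqsum j t \<omega>" for \<omega> t
    unfolding mono_def sqsum_def by (auto intro!: sum_mono2 sum_nonneg)
qed

abbreviation sigma_seq :: "real \<Rightarrow> (nat \<Rightarrow> real) \<Rightarrow> real \<Rightarrow> 'a \<Rightarrow> nat \<Rightarrow> real" where
  "sigma_seq d X0 \<sigma>0 \<omega> \<equiv> csa_sigma n lam c d (\<lambda>x. x 1) X0 \<sigma>0 (\<lambda>j. p0 j \<omega>) (\<lambda>t i j. xi t i j \<omega>)"

abbreviation p_seq :: "real \<Rightarrow> (nat \<Rightarrow> real) \<Rightarrow> real \<Rightarrow> 'a \<Rightarrow> nat \<Rightarrow> nat \<Rightarrow> real" where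
  "p_seq d X0 \<sigma>0 \<omega> \<equiv> csa_p n lam c d (\<lambda>x. x 1) X0 \<sigma>0 (\<lambda>j. p0 j \<omega>) (\<lambda>t i j. xi t i j \<omega>)"

lemma p_seq_eq_path_coord: "\<sigma>0 > 0 \<Longrightarrow> p_seq d X0 \<sigma>0 \<omega> t = (\<lambda>j. path_coord j t \<omega>)"
  using csa_p_first_coordinate[OF lam_ge_1]
  by (simp add: noise_env_eq_noise path_coord_def[abs_def])

lemma ln_sigma_seq_Suc_div:
  assumes "\<sigma>0 > 0"
  shows "ln (sigma_seq d X0 \<sigma>0 \<omega> (Suc t) / sigma_seq d X0 \<sigma>0 \<omega> t)
    = c / (2 * d) * ((\<Sum>j=1..n. path_coord j (Suc t) \<omega> ^ 2) / real n - 1)"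
  unfolding ln_csa_sigma_Suc_div[OF assms] p_seq_eq_path_coord[OF assms] sqnorm_def ..

lemma ln_sigma_seq_div_initial:
  assumes "\<sigma>0 > 0"
  shows "ln (sigma_seq d X0 \<sigma>0 \<omega> t / \<sigma>0)
    = c / (2 * d) * ((\<Sum>j=1..n. sqsum j t \<omega>) / real n - real t)"
proof -
  have "ln (sigma_seq d X0 \<sigma>0 \<omega> t / \<sigma>0)
      = c / (2 * d) * ((\<Sum>s=1..t. \<Sum>j=1..n. path_coord j s \<omega> ^ 2) / real n - real t)"
    unfolding ln_csa_sigma_div_initial[OF assms] p_seq_eq_path_coord[OF assms] sqnorm_def
    by (simp add: sum_distrib_left[symmetric] sum_subtractf sum_divide_distrib[symmetric])
  then show ?thesis unfolding sqsum_def sum.swap[of _ "{1..t}"] .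
qed

lemma sum_split_first:
  fixes f :: "nat \<Rightarrow> real"
  shows "(\<Sum>j=1..n. f j) = f 1 + (\<Sum>j=2..n. f j)"
  using sum.atLeast_Suc_atMost[OF n_ge_1, of f] by (simp add: numeral_2_eq_2)

lemma ln_sigma_seq_deviation_eq:
  assumes "d > 0" "\<sigma>0 > 0" "t \<ge> 1"
  shows "ln (sigma_seq d X0 \<sigma>0 \<omega> t / \<sigma>0) / real t
      - c / (2 * d * real n) * ((\<Sum>i=1..t. (p_seq d X0 \<sigma>0 \<omega> i 1)\<^sup>2) / real t - 1)
    = c / (2 * d * real n) * (\<Sum>j=2..n. sqsum j t \<omega> / real t - 1)"
proof -
  have "(\<Sum>i=1..t. (p_seq d X0 \<sigma>0 \<omega> i 1)\<^sup>2) = sqsum 1 t \<omega>"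
    unfolding p_seq_eq_path_coord[OF assms(2)] sqsum_def ..
  moreover have "(\<Sum>j=2..n. sqsum j t \<omega> / real t - 1) = (\<Sum>j=2..n. sqsum j t \<omega>) / real t - (real n - 1)"
    using n_ge_1 by (simp add: sum_subtractf sum_divide_distrib)
  moreover have "c / (2 * d) * ((A + R) / N - T) / T - c / (2 * d * N) * (A / T - 1)
      = c / (2 * d * N) * (R / T - (N - 1))" if "N > 0" "T > 0" for A R N T :: real
    using that assms(1) by (simp add: field_simps)
  moreover have "real n > 0" "real t > 0" using n_ge_1 assms(3) by simp_all
  ultimately show ?thesis
    unfolding ln_sigma_seq_div_initial[OF assms(2)] sum_split_first by metis
qed

lemma AE_ln_sigma_seq_deviation_LIMSEQ:
  assumes "d > 0" "\<sigma>0 > 0"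
  shows "AE \<omega> in M. (\<lambda>t. ln (sigma_seq d X0 \<sigma>0 \<omega> t / \<sigma>0) / real t
      - c / (2 * d * real n) * ((\<Sum>i=1..t. (p_seq d X0 \<sigma>0 \<omega> i 1)\<^sup>2) / real t - 1)) \<longlonglongrightarrow> 0"
proof -
  have "AE \<omega> in M. \<forall>j\<in>{2..n}. (\<lambda>t. sqsum j t \<omega> / real t) \<longlonglongrightarrow> 1"
    by (rule AE_finite_allI) (simp_all add: AE_sqsum_LIMSEQ)
  then show ?thesis
  proof (rule AE_mp, intro AE_I2 impI)
    fix \<omega> assume "\<forall>j\<in>{2..n}. (\<lambda>t. sqsum j t \<omega> / real t) \<longlonglongrightarrow> 1"
    then have "(\<lambda>t. c / (2 * d * real n) * (\<Sum>j=2..n. sqsum j t \<omega> / real t - 1))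
        \<longlonglongrightarrow> c / (2 * d * real n) * (\<Sum>j=2..n. 1 - 1)"
      by (intro tendsto_intros) auto
    moreover have "eventually (\<lambda>t. c / (2 * d * real n) * (\<Sum>j=2..n. sqsum j t \<omega> / real t - 1)
        = ln (sigma_seq d X0 \<sigma>0 \<omega> t / \<sigma>0) / real t
          - c / (2 * d * real n) * ((\<Sum>i=1..t. (p_seq d X0 \<sigma>0 \<omega> i 1)\<^sup>2) / real t - 1)) sequentially"
      using eventually_ge_at_top[of 1] by eventually_elim (rule ln_sigma_seq_deviation_eq[OF assms, symmetric])
    ultimately show "(\<lambda>t. ln (sigma_seq d X0 \<sigma>0 \<omega> t / \<sigma>0) / real t
      - c / (2 * d * real n) * ((\<Sum>i=1..t. (p_seq d X0 \<sigma>0 \<omega> i 1)\<^sup>2) / real t - 1)) \<longlonglongrightarrow> 0"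
      by (simp add: tendsto_cong)
  qed
qed

lemma integral_ln_sigma_seq_Suc_div:
  assumes "d > 0" "\<sigma>0 > 0"
  shows "(\<integral>\<omega>. ln (sigma_seq d X0 \<sigma>0 \<omega> (Suc t) / sigma_seq d X0 \<sigma>0 \<omega> t) \<partial>M)
    = c / (2 * d * real n) * ((\<integral>\<omega>. (p_seq d X0 \<sigma>0 \<omega> (Suc t) 1)\<^sup>2 \<partial>M) - 1)"
proof -
  have integrable: "integrable M (\<lambda>\<omega>. path_coord j (Suc t) \<omega> ^ 2)" if "j \<in> {1..n}" for j
    by (intro has_moments_integrable has_moments_power has_moments_path_coord that)
  let ?S = "\<lambda>\<omega>. \<Sum>j=1..n. path_coord j (Suc t) \<omega> ^ 2"
  have "(\<integral>\<omega>. ?S \<omega> \<partial>M) = (\<Sum>j=1..n. \<integral>\<omega>. path_coord j (Suc t) \<omega> ^ 2 \<partial>M)"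
    using integrable by (rule Bochner_Integration.integral_sum)
  also have "\<dots> = (\<integral>\<omega>. path_coord 1 (Suc t) \<omega> ^ 2 \<partial>M) + (real n - 1)"
    unfolding sum_split_first using path_coord_moments n_ge_1 by simp
  finally have integral_S: "(\<integral>\<omega>. ?S \<omega> \<partial>M) = (\<integral>\<omega>. path_coord 1 (Suc t) \<omega> ^ 2 \<partial>M) + (real n - 1)" .
  have "integrable M ?S" using integrable by (rule Bochner_Integration.integrable_sum)
  then have "(\<integral>\<omega>. ln (sigma_seq d X0 \<sigma>0 \<omega> (Suc t) / sigma_seq d X0 \<sigma>0 \<omega> t) \<partial>M)
      = c / (2 * d) * ((\<integral>\<omega>. ?S \<omega> \<partial>M) / real n - 1)"
    unfolding ln_sigma_seq_Suc_div[OF assms(2)] by (simp add: prob_space)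
  also have "\<dots> = c / (2 * d * real n) * ((\<integral>\<omega>. path_coord 1 (Suc t) \<omega> ^ 2 \<partial>M) - 1)"
    unfolding integral_S using assms(1) n_ge_1 by (simp add: field_simps)
  finally show ?thesis unfolding p_seq_eq_path_coord[OF assms(2)] .
qed

end

theorem lemma11:
  fixes M :: "'a measure" and n lam :: nat and c d \<sigma>0 :: real
    and X0 :: "nat \<Rightarrow> real"
    and p0 :: "nat \<Rightarrow> 'a \<Rightarrow> real"
    and xi :: "nat \<Rightarrow> nat \<Rightarrow> nat \<Rightarrow> 'a \<Rightarrow> real"
  assumes "prob_space M"
    and "n \<ge> 1" and "lam \<ge> 1" and "0 < c" and "c < 1" and "d > 0" and "\<sigma>0 > 0"
    and "prob_space.indep_vars M (\<lambda>_. borel)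
           (\<lambda>k. case k of Inl j \<Rightarrow> p0 j | Inr (t, i, j) \<Rightarrow> xi t i j)
           ({Inl j | j. j \<in> {1..n}} \<union> {Inr (t, i, j) | t i j. i \<in> {1..lam} \<and> j \<in> {1..n}})"
    and "\<forall>j\<in>{1..n}. distributed M lborel (p0 j) std_normal_density"
    and "\<forall>t. \<forall>i\<in>{1..lam}. \<forall>j\<in>{1..n}. distributed M lborel (xi t i j) std_normal_density"
  shows "(AE \<omega> in M.
           ((\<lambda>t. ln (csa_sigma n lam c d (\<lambda>x. x 1) X0 \<sigma>0 (\<lambda>j. p0 j \<omega>) (\<lambda>t i j. xi t i j \<omega>) t / \<sigma>0) / real t
               - c / (2 * d * real n) *
                 ((\<Sum>i=1..t. (csa_p n lam c d (\<lambda>x. x 1) X0 \<sigma>0 (\<lambda>j. p0 j \<omega>) (\<lambda>t i j. xi t i j \<omega>) i 1)\<^sup>2) / real t - 1))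
            \<longlonglongrightarrow> 0))
       \<and> (\<forall>t. (\<integral>\<omega>. ln (csa_sigma n lam c d (\<lambda>x. x 1) X0 \<sigma>0 (\<lambda>j. p0 j \<omega>) (\<lambda>t i j. xi t i j \<omega>) (Suc t)
                      / csa_sigma n lam c d (\<lambda>x. x 1) X0 \<sigma>0 (\<lambda>j. p0 j \<omega>) (\<lambda>t i j. xi t i j \<omega>) t) \<partial>M)
              = c / (2 * d * real n) *
                ((\<integral>\<omega>. (csa_p n lam c d (\<lambda>x. x 1) X0 \<sigma>0 (\<lambda>j. p0 j \<omega>) (\<lambda>t i j. xi t i j \<omega>) (Suc t) 1)\<^sup>2 \<partial>M) - 1))"
proof -
  interpret csa_noise M n lam c p0 xi
    by (intro csa_noise.intro csa_noise_axioms.intro) (use assms in auto)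
  show ?thesis
    using AE_ln_sigma_seq_deviation_LIMSEQ integral_ln_sigma_seq_Suc_div assms by blast
qed

end
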